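(* Let $d>1$ and let $L$ be an infinite simple modular ortholattice of height $d(L)=d$. Then $L$ has no finite test set.
   Context: A modular ortholattice (MOL) is a modular lattice with bounds $0,1$ together with an orthocomplementation $x\mapsto x'$ (an order-reversing involution with $x\wedge x'=0$, $x\vee x'=1$); its height is $d$ if maximal chains have $d+1$ elements. A subset $S\subseteq L$ is a test set for $L$ if every ortholattice identity which holds under all assignments of its variables to elements of $S$ holds in $L$. *)

theory Defs
  imports "HOL-Library.Complemented_Lattices"
begin

unbundle lattice_syntax

text \<open>Modular ortholattices are modelled as types of class orthocomplemented_lattice
  (bounded lattice with an order-reversing involutive complement x' = -x satisfying
  x \<sqinter> -x = bot, x \<squnion> -x = top) that satisfy the modular law.\<close>

definition modular_lattice :: "'a::lattice itself \<Rightarrow> bool" where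
  "modular_lattice _ \<longleftrightarrow> (\<forall>x y z::'a. x \<le> z \<longrightarrow> x \<squnion> (y \<sqinter> z) = (x \<squnion> y) \<sqinter> z)"

definition maximal_chain :: "'a::order set \<Rightarrow> bool" where
  "maximal_chain C \<longleftrightarrow> Complete_Partial_Order.chain (\<le>) C \<and>
     (\<forall>D. Complete_Partial_Order.chain (\<le>) D \<and> C \<subseteq> D \<longrightarrow> D = C)"

definition lattice_height :: "'a::order itself \<Rightarrow> nat \<Rightarrow> bool" where
  "lattice_height _ d \<longleftrightarrow> (\<forall>C::'a set. maximal_chain C \<longrightarrow> finite C \<and> card C = d + 1)"

definition ol_congruence :: "('a::orthocomplemented_lattice \<times> 'a) set \<Rightarrow> bool" where
  "ol_congruence R \<longleftrightarrow> equiv UNIV R \<and>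
     (\<forall>a b c d. (a,b) \<in> R \<and> (c,d) \<in> R \<longrightarrow> (a \<sqinter> c, b \<sqinter> d) \<in> R \<and> (a \<squnion> c, b \<squnion> d) \<in> R) \<and>
     (\<forall>a b. (a,b) \<in> R \<longrightarrow> (- a, - b) \<in> R)"

definition simple_ol :: "'a::orthocomplemented_lattice itself \<Rightarrow> bool" where
  "simple_ol _ \<longleftrightarrow> (\<exists>x y::'a. x \<noteq> y) \<and>
     (\<forall>R::('a \<times> 'a) set. ol_congruence R \<longrightarrow> R = Id \<or> R = UNIV)"

datatype ol_term = Var nat | Bot | Top | Meet ol_term ol_term | Join ol_term ol_term | Compl ol_term

primrec ol_eval :: "(nat \<Rightarrow> 'a::orthocomplemented_lattice) \<Rightarrow> ol_term \<Rightarrow> 'a" where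
  "ol_eval v (Var i) = v i"
| "ol_eval v Bot = bot"
| "ol_eval v Top = top"
| "ol_eval v (Meet s t) = ol_eval v s \<sqinter> ol_eval v t"
| "ol_eval v (Join s t) = ol_eval v s \<squnion> ol_eval v t"
| "ol_eval v (Compl s) = - ol_eval v s"

definition test_set :: "'a::orthocomplemented_lattice set \<Rightarrow> bool" where
  "test_set S \<longleftrightarrow> (\<forall>s t. (\<forall>v. (\<forall>i. v i \<in> S) \<longrightarrow> ol_eval v s = ol_eval v t) \<longrightarrow>
                           (\<forall>v::nat \<Rightarrow> 'a. ol_eval v s = ol_eval v t))"

end

theory Submission
  imports Defs
begin

text \<open>If y and z are distinct upper covers of x in a modular lattice, then y \<squnion> z covers both.
  So if x has infinitely many covers, then for a fixed cover y0 either infinitely many covers z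
  give the same join y0 \<squnion> z -- and these form an infinite diamond: elements with common pairwise
  meet a and common pairwise join b > a -- or y0 itself has infinitely many covers. In finite
  height both chain directions are well-founded, so if there were no infinite diamond, induction
  downwards would make every principal filter finite, and L = [0, 1] would be finite.

  The term given by the join over all i < j < n of (x_i \<sqinter> x_j) \<squnion> -(x_i \<squnion> x_j) evaluates to 1
  as soon as two of the x_i coincide, so the identity equating it with 1 holds on every set of
  fewer than n elements. On distinct elements of an infinite diamond it evaluates to a \<squnion> -b,
  which modularity and a < b keep away from 1.\<close>

lemma chain_card_le_height:
  fixes C :: "'a::order set"
  assumes height: "lattice_height TYPE('a) d"
    and "Complete_Partial_Order.chain (\<le>) C"
  shows "finite C \<and> card C \<le> d + 1"
proof -
  let ?A = "{D. Complete_Partial_Order.chain (\<le>) D \<and> C \<subseteq> D}"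
  have "\<exists>M\<in>?A. \<forall>X\<in>?A. M \<subseteq> X \<longrightarrow> X = M"
  proof (rule subset_Zorn_nonempty)
    show "?A \<noteq> {}" using assms(2) by blast
    fix \<C> assume "\<C> \<noteq> {}" and "subset.chain ?A \<C>"
    then have "\<C> \<subseteq> ?A" and nested: "\<forall>X\<in>\<C>. \<forall>Y\<in>\<C>. X \<subseteq> Y \<or> Y \<subseteq> X"
      by (simp_all add: subset_chain_def)
    have "Complete_Partial_Order.chain (\<le>) (\<Union>\<C>)"
    proof (rule chainI)
      fix x y assume "x \<in> \<Union>\<C>" "y \<in> \<Union>\<C>"
      then obtain X Y where "X \<in> \<C>" "Y \<in> \<C>" "x \<in> X" "y \<in> Y" by blast
      then obtain Z where "Z \<in> \<C>" "x \<in> Z" "y \<in> Z"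
        using nested by blast
      with \<open>\<C> \<subseteq> ?A\<close> show "x \<le> y \<or> y \<le> x"
        by (blast dest: chainD)
    qed
    with \<open>\<C> \<noteq> {}\<close> \<open>\<C> \<subseteq> ?A\<close> show "\<Union>\<C> \<in> ?A" by blast
  qed
  then obtain M where "M \<in> ?A" and "\<forall>X\<in>?A. M \<subseteq> X \<longrightarrow> X = M" ..
  then have "C \<subseteq> M" and "maximal_chain M"
    unfolding maximal_chain_def by auto
  with height have "finite M" "card M = d + 1"
    unfolding lattice_height_def by auto
  with \<open>C \<subseteq> M\<close> show ?thesis
    using card_mono finite_subset by fastforce
qed

lemma strict_seq_contradicts_height:
  fixes f :: "nat \<Rightarrow> 'a::order"
  assumes height: "lattice_height TYPE('a) d"
    and strict: "\<And>i j. i < j \<Longrightarrow> f i < f j \<or> f j < f i"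
  shows False
proof -
  have "inj f"
    by (rule injI) (metis strict less_irrefl linorder_neqE_nat)
  have "Complete_Partial_Order.chain (\<le>) (range f)"
  proof (rule chainI)
    fix x y assume "x \<in> range f" "y \<in> range f"
    then obtain i j where "x = f i" "y = f j" by blast
    then show "x \<le> y \<or> y \<le> x"
      using strict[of i j] strict[of j i] by (cases i j rule: linorder_cases) auto
  qed
  then have "finite (range f)"
    using chain_card_le_height[OF height] by blast
  with \<open>inj f\<close> show False
    using finite_imageD by blast
qed

lemma wf_greater_of_height:
  assumes "lattice_height TYPE('a::order) d"
  shows "wf {(y, x::'a). x < y}"
proof (rule ccontr)
  assume "\<not> wf {(y, x::'a). x < y}"
  then obtain f :: "nat \<Rightarrow> 'a" where "\<And>i. f i < f (Suc i)"
    unfolding wf_iff_no_infinite_down_chain by auto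
  then have "f i < f j" if "i < j" for i j
    using that by (rule lift_Suc_mono_less)
  then show False
    using strict_seq_contradicts_height[OF assms] by blast
qed

lemma wf_less_of_height:
  assumes "lattice_height TYPE('a::order) d"
  shows "wf {(x, y::'a). x < y}"
proof (rule ccontr)
  assume "\<not> wf {(x, y::'a). x < y}"
  then obtain f :: "nat \<Rightarrow> 'a" where "\<And>i. f (Suc i) < f i"
    unfolding wf_iff_no_infinite_down_chain by auto
  then have "f j < f i" if "i < j" for i j
    using that by (induction j) (auto intro: less_trans simp: less_Suc_eq)
  then show False
    using strict_seq_contradicts_height[OF assms] by blast
qed

definition upper_covers :: "'a::order \<Rightarrow> 'a set" where
  "upper_covers x = {y. x < y \<and> \<not> (\<exists>z. x < z \<and> z < y)}"

lemma upper_covers_le_imp_eq: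
  assumes "p \<in> upper_covers x" "q \<in> upper_covers x" "p \<le> q"
  shows "p = q"
  using assms unfolding upper_covers_def by (auto simp: le_less)

lemma upper_covers_inf:
  fixes x :: "'a::lattice"
  assumes "p \<in> upper_covers x" "q \<in> upper_covers x" "p \<noteq> q"
  shows "p \<sqinter> q = x"
proof -
  have "x \<le> p \<sqinter> q" "p \<sqinter> q < p"
    using assms upper_covers_le_imp_eq[of p x q] unfolding upper_covers_def
    by (auto simp: less_le_not_le)
  with assms(1) show ?thesis
    unfolding upper_covers_def by (auto simp: le_less)
qed

lemma modular_sup_in_upper_covers:
  fixes x :: "'a::lattice"
  assumes modular: "modular_lattice TYPE('a)"
    and "p \<in> upper_covers x" "q \<in> upper_covers x" "p \<noteq> q"
  shows "p \<squnion> q \<in> upper_covers p"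
proof -
  have "x < q" and meet: "p \<sqinter> q = x"
    using assms(3) upper_covers_inf[OF assms(2-4)] unfolding upper_covers_def by auto
  have "p < p \<squnion> q"
    using upper_covers_le_imp_eq[OF assms(3,2)] assms(4)
    by (metis less_le sup.cobounded1 sup.cobounded2)
  moreover have False if "p < z" "z < p \<squnion> q" for z
  proof -
    have "z \<sqinter> q \<noteq> x"
    proof
      assume "z \<sqinter> q = x"
      have "z = (p \<squnion> q) \<sqinter> z"
        using \<open>z < p \<squnion> q\<close> by (simp add: inf_absorb2 less_imp_le)
      also have "\<dots> = p \<squnion> (q \<sqinter> z)"
        using modular \<open>p < z\<close> unfolding modular_lattice_def by simp
      also have "\<dots> = p"
        using \<open>z \<sqinter> q = x\<close> meet by (metis inf.commute inf.cobounded1 sup_absorb1)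
      finally have "z = p" .
      with \<open>p < z\<close> show False by simp
    qed
    moreover have "x \<le> z \<sqinter> q"
      using meet \<open>p < z\<close> by (metis inf_mono less_imp_le order_refl)
    ultimately have "x < z \<sqinter> q"
      by (simp add: less_le)
    then have "\<not> z \<sqinter> q < q"
      using assms(3) unfolding upper_covers_def by blast
    then have "q \<le> z"
      by (metis inf.cobounded1 inf.cobounded2 le_less)
    then have "p \<squnion> q \<le> z"
      using \<open>p < z\<close> by (simp add: less_imp_le)
    with \<open>z < p \<squnion> q\<close> show False
      using leD by blast
  qed
  ultimately show ?thesis
    unfolding upper_covers_def by blast
qed

lemma exists_upper_cover_below:
  fixes x :: "'a::order"
  assumes height: "lattice_height TYPE('a) d" and "x < z"
  shows "\<exists>c\<in>upper_covers x. c \<le> z"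
proof -
  obtain c where c: "c \<in> {w. x < w \<and> w \<le> z}"
    and minimal: "\<And>w. w < c \<Longrightarrow> w \<notin> {w. x < w \<and> w \<le> z}"
    using wfE_min[OF wf_less_of_height[OF height], of z "{w. x < w \<and> w \<le> z}"] \<open>x < z\<close>
    by auto
  then have "c \<in> upper_covers x"
    unfolding upper_covers_def by (auto dest: order.strict_implies_order intro: order.trans)
  with c show ?thesis by blast
qed

lemma up_set_eq_insert_up_sets_of_covers:
  fixes x :: "'a::order"
  assumes "lattice_height TYPE('a) d"
  shows "{z. x \<le> z} = insert x (\<Union>c\<in>upper_covers x. {z. c \<le> z})"
  using exists_upper_cover_below[OF assms, of x]
  unfolding upper_covers_def by (auto simp: le_less intro: order.strict_trans1)

definition diamond :: "'a::lattice \<Rightarrow> 'a \<Rightarrow> 'a set \<Rightarrow> bool" where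
  "diamond a b Y \<longleftrightarrow> a < b \<and> (\<forall>y\<in>Y. \<forall>z\<in>Y. y \<noteq> z \<longrightarrow> y \<sqinter> z = a \<and> y \<squnion> z = b)"

lemma diamond_of_upper_covers:
  fixes x :: "'a::lattice"
  assumes modular: "modular_lattice TYPE('a)"
    and "F \<noteq> {}" "F \<subseteq> upper_covers x"
    and covered: "\<And>y. y \<in> F \<Longrightarrow> w \<in> upper_covers y"
  shows "diamond x w F"
  unfolding diamond_def
proof (intro conjI ballI impI)
  from \<open>F \<noteq> {}\<close> obtain y where "y \<in> F" by blast
  with assms(3) covered[of y] show "x < w"
    unfolding upper_covers_def by (blast intro: less_trans)
next
  fix y z assume "y \<in> F" "z \<in> F" "y \<noteq> z"
  with assms(3) have y: "y \<in> upper_covers x" and z: "z \<in> upper_covers x" by blast+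
  show "y \<sqinter> z = x"
    using upper_covers_inf[OF y z \<open>y \<noteq> z\<close>] .
  have "y \<squnion> z \<le> w"
    using covered[OF \<open>y \<in> F\<close>] covered[OF \<open>z \<in> F\<close>]
    unfolding upper_covers_def by (simp add: less_imp_le)
  then show "y \<squnion> z = w"
    using upper_covers_le_imp_eq modular_sup_in_upper_covers[OF modular y z \<open>y \<noteq> z\<close>]
      covered[OF \<open>y \<in> F\<close>] by blast
qed

lemma infinite_upper_covers_of_upper_cover:
  fixes x :: "'a::lattice"
  assumes modular: "modular_lattice TYPE('a)"
    and infinite: "infinite (upper_covers x)"
    and no_diamond: "\<nexists>a b Y::'a set. infinite Y \<and> diamond a b Y"
  shows "\<exists>y\<in>upper_covers x. infinite (upper_covers y)"
proof -
  obtain y0 where y0: "y0 \<in> upper_covers x"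
    using infinite by (metis finite.emptyI ex_in_conv)
  let ?C = "upper_covers x - {y0}"
  have sup_covers: "y0 \<squnion> j \<in> upper_covers j" if "j \<in> ?C" for j
    using modular_sup_in_upper_covers[OF modular, of j x y0] y0 that by (simp add: sup.commute)
  have "(\<lambda>j. y0 \<squnion> j) ` ?C \<subseteq> upper_covers y0"
    using modular_sup_in_upper_covers[OF modular y0] by blast
  moreover have "infinite ((\<lambda>j. y0 \<squnion> j) ` ?C)"
  proof
    assume "finite ((\<lambda>j. y0 \<squnion> j) ` ?C)"
    then obtain j0 where "j0 \<in> ?C" and fibre: "infinite {j \<in> ?C. y0 \<squnion> j = y0 \<squnion> j0}"
      using pigeonhole_infinite[of ?C] infinite by auto
    have "diamond x (y0 \<squnion> j0) {j \<in> ?C. y0 \<squnion> j = y0 \<squnion> j0}"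
    proof (rule diamond_of_upper_covers[OF modular])
      fix y assume "y \<in> {j \<in> ?C. y0 \<squnion> j = y0 \<squnion> j0}"
      then show "y0 \<squnion> j0 \<in> upper_covers y"
        using sup_covers[of y] by simp
    qed (use \<open>j0 \<in> ?C\<close> in auto)
    with fibre no_diamond show False by blast
  qed
  ultimately show ?thesis
    using y0 finite_subset by blast
qed

lemma infinite_diamond_of_height:
  assumes modular: "modular_lattice TYPE('a::bounded_lattice_bot)"
    and height: "lattice_height TYPE('a) d"
    and infinite: "infinite (UNIV :: 'a set)"
  shows "\<exists>a b Y::'a set. infinite Y \<and> diamond a b Y"
proof (rule ccontr)
  assume no_diamond: "\<nexists>a b Y::'a set. infinite Y \<and> diamond a b Y"
  have "finite {z. x \<le> z}" for x :: 'a
    using wf_greater_of_height[OF height]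
  proof (induction x rule: wf_induct_rule)
    case (less x)
    then have finite_above_covers: "finite {z. c \<le> z}" if "c \<in> upper_covers x" for c
      using that unfolding upper_covers_def by blast
    have "finite (upper_covers x)"
    proof (rule ccontr)
      assume "infinite (upper_covers x)"
      then obtain c where "c \<in> upper_covers x" "infinite (upper_covers c)"
        using infinite_upper_covers_of_upper_cover[OF modular _ no_diamond] by blast
      moreover have "upper_covers c \<subseteq> {z. c \<le> z}"
        unfolding upper_covers_def by auto
      ultimately show False
        using finite_above_covers finite_subset by blast
    qed
    then show ?case
      using up_set_eq_insert_up_sets_of_covers[OF height, of x] finite_above_covers by simp
  qed
  from this[of bot] infinite show False by simp
qed

lemma modular_sup_compl_top_imp_eq:
  fixes a b :: "'a::complemented_lattice"
  assumes "modular_lattice TYPE('a)" "a \<le> b" "a \<squnion> - b = \<top>"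
  shows "a = b"
proof -
  have "a = a \<squnion> (- b \<sqinter> b)"
    by simp
  also have "\<dots> = (a \<squnion> - b) \<sqinter> b"
    using assms(1,2) unfolding modular_lattice_def by blast
  also have "\<dots> = b"
    using assms(3) by simp
  finally show ?thesis .
qed

fun joins :: "ol_term list \<Rightarrow> ol_term" where
  "joins [] = Bot"
| "joins (t # ts) = Join t (joins ts)"

lemma ol_eval_joins_top:
  "t \<in> set ts \<Longrightarrow> ol_eval v t = \<top> \<Longrightarrow> ol_eval v (joins ts) = \<top>"
  by (induction ts) auto

lemma ol_eval_joins_const:
  "ts \<noteq> [] \<Longrightarrow> (\<And>t. t \<in> set ts \<Longrightarrow> ol_eval v t = c) \<Longrightarrow> ol_eval v (joins ts) = c"
proof (induction ts)
  case (Cons t ts)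
  then show ?case by (cases "ts = []") auto
qed simp

definition coincidence_term :: "ol_term \<Rightarrow> ol_term \<Rightarrow> ol_term" where
  "coincidence_term s t = Join (Meet s t) (Compl (Join s t))"

definition coincidence_terms :: "nat \<Rightarrow> ol_term list" where
  "coincidence_terms n = [coincidence_term (Var i) (Var j). j \<leftarrow> [0..<n], i \<leftarrow> [0..<j]]"

lemma set_coincidence_terms:
  "set (coincidence_terms n) = {coincidence_term (Var i) (Var j) |i j. i < j \<and> j < n}"
  unfolding coincidence_terms_def by auto blast

definition pigeonhole_term :: "nat \<Rightarrow> ol_term" where
  "pigeonhole_term n = joins (coincidence_terms n)"

lemma ol_eval_pigeonhole_term_top:
  assumes "i < j" "j < n" "v i = v j"
  shows "ol_eval v (pigeonhole_term n) = \<top>"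
  unfolding pigeonhole_term_def
proof (rule ol_eval_joins_top)
  show "coincidence_term (Var i) (Var j) \<in> set (coincidence_terms n)"
    using assms(1,2) unfolding set_coincidence_terms by blast
  show "ol_eval v (coincidence_term (Var i) (Var j)) = \<top>"
    using assms(3) by (simp add: coincidence_term_def sup_commute)
qed

lemma ol_eval_pigeonhole_term_diamond:
  assumes "diamond a b Y" "inj g" "range g \<subseteq> Y" "2 \<le> n"
  shows "ol_eval g (pigeonhole_term n) = a \<squnion> - b"
  unfolding pigeonhole_term_def
proof (rule ol_eval_joins_const)
  have "coincidence_term (Var 0) (Var 1) \<in> set (coincidence_terms n)"
    using assms(4) unfolding set_coincidence_terms
    by (intro CollectI exI[of _ 0] exI[of _ 1]) auto
  then show "coincidence_terms n \<noteq> []"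
    by auto
next
  fix t assume "t \<in> set (coincidence_terms n)"
  then obtain i j where t: "t = coincidence_term (Var i) (Var j)" and "i < j"
    by (auto simp: set_coincidence_terms)
  then have "g i \<noteq> g j"
    using \<open>inj g\<close> by (auto dest: injD)
  moreover have "g i \<in> Y" "g j \<in> Y"
    using assms(3) by auto
  ultimately have "g i \<sqinter> g j = a" "g i \<squnion> g j = b"
    using assms(1) unfolding diamond_def by blast+
  then show "ol_eval g t = a \<squnion> - b"
    by (simp add: t coincidence_term_def)
qed

lemma test_setD:
  fixes S :: "'a::orthocomplemented_lattice set" and v :: "nat \<Rightarrow> 'a"
  assumes "test_set S" "\<And>v. (\<And>i. v i \<in> S) \<Longrightarrow> ol_eval v s = ol_eval v t"
  shows "ol_eval v s = ol_eval v t"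
  using assms unfolding test_set_def by blast

lemma pigeonhole_identity_of_finite_test_set:
  fixes S :: "'a::orthocomplemented_lattice set" and v :: "nat \<Rightarrow> 'a"
  assumes "finite S" "test_set S" "card S < n"
  shows "ol_eval v (pigeonhole_term n) = \<top>"
proof -
  have "ol_eval v (pigeonhole_term n) = ol_eval v Top"
  proof (rule test_setD[OF \<open>test_set S\<close>])
    fix w :: "nat \<Rightarrow> 'a" assume "\<And>i. w i \<in> S"
    have "card (w ` {..<n}) \<le> card S"
      using \<open>\<And>i. w i \<in> S\<close> \<open>finite S\<close> by (intro card_mono) auto
    with \<open>card S < n\<close> have "\<not> inj_on w {..<n}"
      using card_image by fastforce
    then obtain i j where "i < j" "j < n" "w i = w j"
      unfolding inj_on_def by (metis lessThan_iff linorder_neqE_nat)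
    then show "ol_eval w (pigeonhole_term n) = ol_eval w Top"
      using ol_eval_pigeonhole_term_top by simp
  qed
  then show ?thesis by simp
qed

theorem mainTheorem6:
  fixes d :: nat
  assumes "d > 1"
    and "modular_lattice TYPE('a::orthocomplemented_lattice)"
    and "infinite (UNIV :: 'a set)"
    and "simple_ol TYPE('a)"
    and "lattice_height TYPE('a) d"
  shows "\<not> (\<exists>S :: 'a set. finite S \<and> test_set S)"
proof
  assume "\<exists>S :: 'a set. finite S \<and> test_set S"
  then obtain S :: "'a set" where "finite S" "test_set S" by blast
  obtain a b and Y :: "'a set" where "infinite Y" "diamond a b Y"
    using infinite_diamond_of_height[OF assms(2,5,3)] by blast
  obtain g :: "nat \<Rightarrow> 'a" where "inj g" "range g \<subseteq> Y"
    using infinite_countable_subset[OF \<open>infinite Y\<close>] by blast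
  define n where "n = card S + 2"
  have "ol_eval g (pigeonhole_term n) = \<top>"
    using pigeonhole_identity_of_finite_test_set[OF \<open>finite S\<close> \<open>test_set S\<close>] n_def by simp
  moreover have "ol_eval g (pigeonhole_term n) = a \<squnion> - b"
    using ol_eval_pigeonhole_term_diamond[OF \<open>diamond a b Y\<close> \<open>inj g\<close> \<open>range g \<subseteq> Y\<close>] n_def
    by simp
  moreover have "a \<squnion> - b \<noteq> \<top>"
    using modular_sup_compl_top_imp_eq[OF assms(2), of a b] \<open>diamond a b Y\<close>
    unfolding diamond_def by (auto simp: less_le)
  ultimately show False by simp
qed

end
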